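(* Let $k\ge2$ and let $u_1,\dots,u_k$ be homogeneous elements of $\mathfrak{B}(V)$ with $u_iu_j=r_{i,j}u_ju_i$ for scalars $r_{i,j}\in F^*$, where $r_{i,j}=1$ whenever $u_i=u_j$. For $a\in\mathfrak{B}(V)$ let $l_i(a):=[u_i,a]^-$. (i) For all $m_2,\dots,m_k\in\mathbb{N}$, $$l_k^{m_k}l_{k-1}^{m_{k-1}}\cdots l_2^{m_2}(u_1)=\lambda_2^{m_2}\lambda_3^{m_3}\cdots\lambda_k^{m_k}\;u_1u_2^{m_2}\cdots u_k^{m_k},\qquad \lambda_i:=r_{i,1}r_{i,2}^{m_2}\cdots r_{i,i-1}^{m_{i-1}}-1 .$$ (ii) If $u_1,\dots,u_k\in\mathfrak{L}^-(V)$ and $r_{i,1}r_{i,2}\cdots r_{i,i-1}\neq1$ for $2\le i\le k$, then $u_1u_2\cdots u_k\in\mathfrak{L}^-(V)$. (iii) Let $u_1,u_2\in\mathfrak{L}^-(V)$ be homogeneous with $u_1u_2=r_{1,2}u_2u_1$, $u_2u_1=r_{2,1}u_1u_2$, and let $\alpha_1,\alpha_2\ge1$ with $u_1^{\alpha_1}u_2^{\alpha_2}\neq0$. If $\operatorname{ord}(r_{2,1})\nmid\alpha_1$ or $\operatorname{ord}(r_{1,2})\nmid\alpha_2$, then $u_1^{\alpha_1}u_2^{\alpha_2}\in\mathfrak{L}^-(V)$. (iv) If moreover in (iii) $u_1,u_2\in\{x_1,\dots,x_n\}$, then $u_1^{\alpha_1}u_2^{\alpha_2}\in\mathfrak{L}^-(V)$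 if and only if $\operatorname{ord}(r_{2,1})\nmid\alpha_1$ or $\operatorname{ord}(r_{1,2})\nmid\alpha_2$.
   Context: $V$ is a braided vector space of diagonal type over an algebraically closed field $F$ of characteristic $0$ with basis $x_1,\dots,x_n$ and Nichols algebra $\mathfrak{B}(V)$. $[a,b]^-:=ab-ba$, and $\mathfrak{L}^-(V)$ is the Lie subalgebra of $\mathfrak{B}(V)$ generated by $V$ under $[\,,\,]^-$. $\operatorname{ord}(a)$ is the multiplicative order of $a\in F^*$ (with $\operatorname{ord}(a)=\infty$ if $a$ is not a root of unity), and by convention $\infty$ does not divide any integer. *)

theory Defs
  imports Main "HOL-Computational_Algebra.Polynomial"
begin

text \<open>Realisation of the Nichols algebra B(V) of a diagonal braiding
  c(x_i \<otimes> x_j) = q i j x_j \<otimes> x_i (letters i < n) as the subalgebra of the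
  quantum shuffle algebra generated by V (Rosso/Schauenburg).  Elements of the
  shuffle algebra are functions from words (nat list) to scalars.\<close>

text \<open>Quantum shuffle product of two words, as a coefficient function.
  (x u) sh (y v) = x (u sh (y v)) + (prod of q a y over a in x u) y ((x u) sh v).\<close>
fun wsh :: "(nat \<Rightarrow> nat \<Rightarrow> 'a::comm_ring_1) \<Rightarrow> nat list \<Rightarrow> nat list \<Rightarrow> nat list \<Rightarrow> 'a" where
  "wsh q [] v w = (if w = v then 1 else 0)"
| "wsh q (x#u) [] w = (if w = x#u then 1 else 0)"
| "wsh q (x#u) (y#v) [] = 0"
| "wsh q (x#u) (y#v) (z#w) =
     (if z = x then wsh q u (y#v) w else 0)
   + (if z = y then prod_list (map (\<lambda>a. q a y) (x#u)) * wsh q (x#u) v w else 0)"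

definition shprod :: "(nat \<Rightarrow> nat \<Rightarrow> 'a::comm_ring_1) \<Rightarrow> (nat list \<Rightarrow> 'a) \<Rightarrow> (nat list \<Rightarrow> 'a) \<Rightarrow> nat list \<Rightarrow> 'a" where
  "shprod q f g = (\<lambda>w. \<Sum>u\<in>set (subseqs w). \<Sum>v\<in>set (subseqs w). f u * g v * wsh q u v w)"

definition monom :: "nat list \<Rightarrow> nat list \<Rightarrow> 'a::comm_ring_1" where
  "monom w = (\<lambda>w'. if w' = w then 1 else 0)"

definition gen :: "nat \<Rightarrow> nat list \<Rightarrow> 'a::comm_ring_1" where
  "gen i = monom [i]"

definition smul :: "'a::comm_ring_1 \<Rightarrow> (nat list \<Rightarrow> 'a) \<Rightarrow> nat list \<Rightarrow> 'a" where
  "smul c f = (\<lambda>w. c * f w)"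

primrec shpow :: "(nat \<Rightarrow> nat \<Rightarrow> 'a::comm_ring_1) \<Rightarrow> (nat list \<Rightarrow> 'a) \<Rightarrow> nat \<Rightarrow> nat list \<Rightarrow> 'a" where
  "shpow q f 0 = monom []"
| "shpow q f (Suc m) = shprod q f (shpow q f m)"

definition br :: "(nat \<Rightarrow> nat \<Rightarrow> 'a::comm_ring_1) \<Rightarrow> (nat list \<Rightarrow> 'a) \<Rightarrow> (nat list \<Rightarrow> 'a) \<Rightarrow> nat list \<Rightarrow> 'a" where
  "br q f g = (\<lambda>w. shprod q f g w - shprod q g f w)"

inductive_set nichols :: "(nat \<Rightarrow> nat \<Rightarrow> 'a::comm_ring_1) \<Rightarrow> nat \<Rightarrow> (nat list \<Rightarrow> 'a) set"
  for q n where
  one: "monom [] \<in> nichols q n"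
| gen: "i < n \<Longrightarrow> gen i \<in> nichols q n"
| add: "f \<in> nichols q n \<Longrightarrow> g \<in> nichols q n \<Longrightarrow> (\<lambda>w. f w + g w) \<in> nichols q n"
| smul: "f \<in> nichols q n \<Longrightarrow> smul c f \<in> nichols q n"
| mult: "f \<in> nichols q n \<Longrightarrow> g \<in> nichols q n \<Longrightarrow> shprod q f g \<in> nichols q n"

inductive_set lie_minus :: "(nat \<Rightarrow> nat \<Rightarrow> 'a::comm_ring_1) \<Rightarrow> nat \<Rightarrow> (nat list \<Rightarrow> 'a) set"
  for q n where
  gen: "i < n \<Longrightarrow> gen i \<in> lie_minus q n"
| add: "f \<in> lie_minus q n \<Longrightarrow> g \<in> lie_minus q n \<Longrightarrow> (\<lambda>w. f w + g w) \<in> lie_minus q n"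
| smul: "f \<in> lie_minus q n \<Longrightarrow> smul c f \<in> lie_minus q n"
| bracket: "f \<in> lie_minus q n \<Longrightarrow> g \<in> lie_minus q n \<Longrightarrow> br q f g \<in> lie_minus q n"

text \<open>Homogeneous with respect to the N^n-grading (degree of a word = multiset of its letters).\<close>
definition homogeneous :: "(nat list \<Rightarrow> 'a::zero) \<Rightarrow> bool" where
  "homogeneous f = (\<exists>d. \<forall>w. f w \<noteq> 0 \<longrightarrow> mset w = d)"

text \<open>Multiplicative order: None encodes infinity (not a root of unity).\<close>
definition mult_order :: "'a::comm_ring_1 \<Rightarrow> nat option" where
  "mult_order a = (if \<exists>k>0. a ^ k = 1 then Some (LEAST k. k > 0 \<and> a ^ k = 1) else None)"

text \<open>ord(a) divides m; infinity divides no integer.\<close>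
definition ord_dvd :: "'a::comm_ring_1 \<Rightarrow> nat \<Rightarrow> bool" where
  "ord_dvd a m = (case mult_order a of None \<Rightarrow> False | Some d \<Rightarrow> d dvd m)"

definition alg_closed :: "'a::field itself \<Rightarrow> bool" where
  "alg_closed _ = (\<forall>p::'a poly. degree p > 0 \<longrightarrow> (\<exists>x. poly p x = 0))"

end

(*
  (i) rests on one identity: if u B = \<rho> B u then [u, B u^j] = (\<rho> - 1) B u^(j+1), so
  l_u^m (B) = (\<rho> - 1)^m B u^m.  Applying it for u = u_i and B = u_1 u_2^m_2 ... u_(i-1)^m_(i-1),
  whose commutation factor with u_i is r_(i,1) r_(i,2)^m_2 ... r_(i,i-1)^m_(i-1), gives (i); (ii) is
  the case m = 1, where the scalar is nonzero.

  (iii): l_(u_1)^a_1 (u_2) is a nonzero multiple of u_1^a_1 u_2 when r_(1,2) \<noteq> 1, and then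
  l_(u_2)^(a_2 - 1) of it is a nonzero multiple of u_1^a_1 u_2^a_2 when r_(2,1)^a_1 \<noteq> 1; since
  u_1 u_2 \<noteq> 0 forces r_(1,2) r_(2,1) = 1, the other case is symmetric.

  (iv), the converse: in the multidegree a_1 x_1 + a_2 x_2, every element of L^-(V) has a
  component c x_1^a_1 x_2^a_2.  For a commutator [F, G], the contributions of the splittings
  d + e of that degree to FG and to GF match after exchanging d and e, because
  r_(2,1)^a_1 = r_(2,1)^a_2 = 1 makes the commutation factors symmetric; hence c = 0.
*)

theory Submission
  imports Defs "HOL-Library.Sublist" "HOL-Library.Product_Plus"
begin

definition weight :: "(nat \<Rightarrow> nat \<Rightarrow> 'a::comm_ring_1) \<Rightarrow> nat list \<Rightarrow> nat \<Rightarrow> 'a" where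
  "weight q w z = prod_list (map (\<lambda>a. q a z) w)"

definition lderiv :: "nat \<Rightarrow> (nat list \<Rightarrow> 'a) \<Rightarrow> nat list \<Rightarrow> 'a" where
  "lderiv z f = (\<lambda>w. f (z # w))"

text \<open>The coefficient of w in twist q z f carries the braiding factor of moving the letter z
  past the word w, as in the recursion of wsh.\<close>
definition twist :: "(nat \<Rightarrow> nat \<Rightarrow> 'a::comm_ring_1) \<Rightarrow> nat \<Rightarrow> (nat list \<Rightarrow> 'a) \<Rightarrow> nat list \<Rightarrow> 'a" where
  "twist q z f = (\<lambda>w. weight q w z * f w)"

lemma lderiv_apply: "lderiv z f w = f (z # w)"
  by (simp add: lderiv_def)

lemma wsh_Nil_right: "wsh q u [] w = (if w = u then 1 else 0)"
  by (cases u) auto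

lemma wsh_Nil_word: "wsh q u v [] = (if u = [] \<and> v = [] then 1 else 0)"
  by (cases u; cases v) auto

lemma wsh_Cons_word: "wsh q u v (z # w) =
    (if u \<noteq> [] \<and> hd u = z then wsh q (tl u) v w else 0)
  + (if v \<noteq> [] \<and> hd v = z then weight q u z * wsh q u (tl v) w else 0)"
  by (cases u; cases v) (auto simp: wsh_Nil_right weight_def)

lemma wsh_nonzeroD:
  "wsh q u v w \<noteq> 0 \<Longrightarrow> subseq u w \<and> subseq v w \<and> mset w = mset u + mset v"
proof (induction w arbitrary: u v)
  case Nil
  then show ?case by (simp add: wsh_Nil_word split: if_splits)
next
  case (Cons z w)
  have "(u \<noteq> [] \<and> hd u = z \<and> wsh q (tl u) v w \<noteq> 0) \<or> (v \<noteq> [] \<and> hd v = z \<and> wsh q u (tl v) w \<noteq> 0)"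
    using Cons.prems by (auto simp: wsh_Cons_word split: if_splits)
  then show ?case
  proof
    assume "u \<noteq> [] \<and> hd u = z \<and> wsh q (tl u) v w \<noteq> 0"
    with Cons.IH[of "tl u" v] show ?thesis by (cases u) auto
  next
    assume "v \<noteq> [] \<and> hd v = z \<and> wsh q u (tl v) w \<noteq> 0"
    with Cons.IH[of u "tl v"] show ?thesis by (cases v) auto
  qed
qed

lemma shprod_eq_sum_superset:
  assumes "finite U" "finite V" "{u. subseq u w} \<subseteq> U" "{v. subseq v w} \<subseteq> V"
  shows "shprod q f g w = (\<Sum>u\<in>U. \<Sum>v\<in>V. f u * g v * wsh q u v w)"
proof -
  have zero_u: "wsh q u v w = 0" if "\<not> subseq u w" for u v
    using wsh_nonzeroD that by blast
  have zero_v: "wsh q u v w = 0" if "\<not> subseq v w" for u v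
    using wsh_nonzeroD that by blast
  let ?S = "{u. subseq u w}"
  have "(\<Sum>u\<in>U. \<Sum>v\<in>V. f u * g v * wsh q u v w) = (\<Sum>u\<in>?S. \<Sum>v\<in>V. f u * g v * wsh q u v w)"
    by (rule sum.mono_neutral_right[OF assms(1) assms(3)]) (simp add: zero_u)
  also have "\<dots> = (\<Sum>u\<in>?S. \<Sum>v\<in>?S. f u * g v * wsh q u v w)"
    by (rule sum.cong[OF refl], rule sum.mono_neutral_right[OF assms(2) assms(4)]) (simp add: zero_v)
  finally show ?thesis
    by (simp add: shprod_def set_subseqs_eq)
qed

lemma shprod_Nil: "shprod q f g [] = f [] * g []"
  by (simp add: shprod_def)

lemma shprod_Cons:
  "shprod q f g (z # w) = shprod q (lderiv z f) g w + shprod q (twist q z f) (lderiv z g) w"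
proof -
  let ?U = "{u. subseq u (z # w)}" and ?V = "{u. subseq u w}"
  have fin: "finite ?U" "finite ?V"
    by (simp_all flip: set_subseqs_eq)
  have VU: "?V \<subseteq> ?U"
    by auto
  have heads: "{u \<in> ?U. u \<noteq> [] \<and> hd u = z} = Cons z ` ?V"
    by (auto simp: neq_Nil_conv)
  have "shprod q f g (z # w) = (\<Sum>u\<in>?U. \<Sum>v\<in>?U. f u * g v * wsh q u v (z # w))"
    by (simp add: shprod_def set_subseqs_eq)
  also have "\<dots> = (\<Sum>u\<in>?U. \<Sum>v\<in>?U. if u \<noteq> [] \<and> hd u = z then f u * g v * wsh q (tl u) v w else 0)
      + (\<Sum>u\<in>?U. \<Sum>v\<in>?U. if v \<noteq> [] \<and> hd v = z then weight q u z * f u * g v * wsh q u (tl v) w else 0)"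
    unfolding sum.distrib[symmetric] by (intro sum.cong refl) (simp add: wsh_Cons_word algebra_simps)
  also have "(\<Sum>u\<in>?U. \<Sum>v\<in>?U. if u \<noteq> [] \<and> hd u = z then f u * g v * wsh q (tl u) v w else 0)
      = (\<Sum>u\<in>Cons z ` ?V. \<Sum>v\<in>?U. f u * g v * wsh q (tl u) v w)"
    unfolding heads[symmetric] sum.inter_filter[OF fin(1)] by (intro sum.cong refl) auto
  also have "\<dots> = shprod q (lderiv z f) g w"
    by (subst sum.reindex) (simp_all add: shprod_eq_sum_superset[OF fin(2) fin(1) _ VU] lderiv_def)
  also have "(\<Sum>u\<in>?U. \<Sum>v\<in>?U. if v \<noteq> [] \<and> hd v = z then weight q u z * f u * g v * wsh q u (tl v) w else 0)
      = (\<Sum>u\<in>?U. \<Sum>v\<in>Cons z ` ?V. weight q u z * f u * g v * wsh q u (tl v) w)"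
    unfolding heads[symmetric] by (rule sum.cong[OF refl], rule sum.inter_filter[OF fin(1), symmetric])
  also have "\<dots> = shprod q (twist q z f) (lderiv z g) w"
    by (subst sum.reindex) (simp_all add: shprod_eq_sum_superset[OF fin(1) fin(2) VU] lderiv_def twist_def mult.assoc)
  finally show ?thesis .
qed

lemma smul_apply: "smul c f w = c * f w"
  by (simp add: smul_def)

lemma smul_smul: "smul a (smul b f) = smul (a * b) f"
  by (simp add: smul_def fun_eq_iff)

lemma smul_one: "smul 1 f = f"
  by (simp add: smul_def fun_eq_iff)

lemma shprod_zero_left: "shprod q (\<lambda>w. 0) g = (\<lambda>w. 0)"
  and shprod_zero_right: "shprod q f (\<lambda>w. 0) = (\<lambda>w. 0)"
  by (simp_all add: shprod_def fun_eq_iff)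

lemma shprod_add_left: "shprod q (\<lambda>w. f w + g w) h = (\<lambda>w. shprod q f h w + shprod q g h w)"
  and shprod_add_right: "shprod q h (\<lambda>w. f w + g w) = (\<lambda>w. shprod q h f w + shprod q h g w)"
  by (simp_all add: shprod_def fun_eq_iff algebra_simps sum.distrib)

lemma shprod_smul_left: "shprod q (smul c f) g = smul c (shprod q f g)"
  and shprod_smul_right: "shprod q f (smul c g) = smul c (shprod q f g)"
  by (simp_all add: shprod_def fun_eq_iff smul_def sum_distrib_left algebra_simps)

lemma lderiv_twist: "lderiv y (twist q z f) = smul (q y z) (twist q z (lderiv y f))"
  by (simp add: lderiv_def twist_def smul_def weight_def fun_eq_iff)

lemma twist_twist: "twist q y (twist q z f) = twist q z (twist q y f)"
  by (simp add: twist_def fun_eq_iff algebra_simps)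

lemma lderiv_shprod:
  "lderiv z (shprod q f g) = (\<lambda>w. shprod q (lderiv z f) g w + shprod q (twist q z f) (lderiv z g) w)"
  by (simp add: lderiv_def shprod_Cons)

lemma twist_shprod: "twist q z (shprod q f g) = shprod q (twist q z f) (twist q z g)"
proof
  fix w
  show "twist q z (shprod q f g) w = shprod q (twist q z f) (twist q z g) w"
  proof (induction w arbitrary: f g)
    case Nil
    then show ?case by (simp add: twist_def shprod_Nil weight_def)
  next
    case (Cons y w)
    have "twist q z (shprod q f g) (y # w)
        = q y z * (twist q z (shprod q (lderiv y f) g) w + twist q z (shprod q (twist q y f) (lderiv y g)) w)"
      by (simp add: twist_def weight_def shprod_Cons algebra_simps)
    also have "\<dots> = q y z * (shprod q (twist q z (lderiv y f)) (twist q z g) w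
        + shprod q (twist q z (twist q y f)) (twist q z (lderiv y g)) w)"
      by (simp only: Cons.IH)
    also have "\<dots> = shprod q (twist q z f) (twist q z g) (y # w)"
      by (simp add: shprod_Cons lderiv_twist twist_twist shprod_smul_left shprod_smul_right smul_apply
          algebra_simps)
    finally show ?case .
  qed
qed

lemma shprod_assoc: "shprod q (shprod q f g) h = shprod q f (shprod q g h)"
proof
  fix w
  show "shprod q (shprod q f g) h w = shprod q f (shprod q g h) w"
  proof (induction w arbitrary: f g h)
    case Nil
    then show ?case by (simp add: shprod_Nil)
  next
    case (Cons z w)
    then show ?case
      by (simp add: shprod_Cons lderiv_shprod twist_shprod shprod_add_left shprod_add_right)
  qed
qed

lemma lderiv_monom_Nil: "lderiv z (Defs.monom []) = (\<lambda>w. 0)"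
  by (simp add: lderiv_def monom_def fun_eq_iff)

lemma twist_monom_Nil: "twist q z (Defs.monom []) = Defs.monom []"
  by (simp add: twist_def monom_def weight_def fun_eq_iff)

lemma shprod_monom_Nil_left: "shprod q (Defs.monom []) f = f"
proof
  fix w
  show "shprod q (Defs.monom []) f w = f w"
    by (induction w arbitrary: f)
      (simp add: shprod_Nil monom_def,
        simp add: shprod_Cons lderiv_monom_Nil twist_monom_Nil shprod_zero_left lderiv_apply)
qed

lemma shprod_monom_Nil_right: "shprod q f (Defs.monom []) = f"
proof
  fix w
  show "shprod q f (Defs.monom []) w = f w"
    by (induction w arbitrary: f)
      (simp add: shprod_Nil monom_def, simp add: shprod_Cons lderiv_monom_Nil shprod_zero_right lderiv_apply)
qed

lemma shpow_add: "shpow q f (a + b) = shprod q (shpow q f a) (shpow q f b)"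
  by (induction a) (simp_all add: shprod_monom_Nil_left shprod_assoc)

lemma shpow_Suc_right: "shpow q f (Suc m) = shprod q (shpow q f m) f"
  using shpow_add[of q f m 1] by (simp add: shprod_monom_Nil_right)

lemma br_smul: "br q u (smul c f) = smul c (br q u f)"
  by (simp add: br_def shprod_smul_left shprod_smul_right smul_apply fun_eq_iff algebra_simps)

lemma funpow_br_smul: "(br q u ^^ j) (smul c f) = smul c ((br q u ^^ j) f)"
  by (induction j) (simp_all add: br_smul)

lemma shprod_shpow_commute:
  assumes "shprod q x y = smul s (shprod q y x)"
  shows "shprod q x (shpow q y m) = smul (s ^ m) (shprod q (shpow q y m) x)"
proof (induction m)
  case 0
  then show ?case by (simp add: shprod_monom_Nil_left shprod_monom_Nil_right smul_one)
next
  case (Suc m)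
  have "shprod q x (shpow q y (Suc m)) = smul s (shprod q y (shprod q x (shpow q y m)))"
    by (simp flip: shprod_assoc add: assms shprod_smul_left)
  also have "\<dots> = smul (s ^ Suc m) (shprod q (shpow q y (Suc m)) x)"
    by (simp add: Suc shprod_smul_right smul_smul shprod_assoc)
  finally show ?case .
qed

lemma shpow_shpow_commute:
  assumes "shprod q x y = smul s (shprod q y x)"
  shows "shprod q (shpow q x a) (shpow q y b) = smul (s ^ (a * b)) (shprod q (shpow q y b) (shpow q x a))"
proof (induction a)
  case 0
  then show ?case by (simp add: shprod_monom_Nil_left shprod_monom_Nil_right smul_one)
next
  case (Suc a)
  have "shprod q (shpow q x (Suc a)) (shpow q y b)
      = smul (s ^ (a * b)) (shprod q (shprod q x (shpow q y b)) (shpow q x a))"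
    by (simp add: Suc shprod_assoc shprod_smul_right)
  also have "\<dots> = smul (s ^ (Suc a * b)) (shprod q (shpow q y b) (shpow q x (Suc a)))"
    by (simp add: shprod_shpow_commute[OF assms] shprod_smul_left smul_smul shprod_assoc power_add
        mult_ac)
  finally show ?case .
qed

lemma funpow_br_eq:
  assumes "shprod q u B = smul \<rho> (shprod q B u)"
  shows "(br q u ^^ j) B = smul ((\<rho> - 1) ^ j) (shprod q B (shpow q u j))"
proof (induction j)
  case 0
  then show ?case by (simp add: shprod_monom_Nil_right smul_one)
next
  case (Suc j)
  have "shprod q u (shprod q B (shpow q u j)) = smul \<rho> (shprod q B (shpow q u (Suc j)))"
    by (simp flip: shprod_assoc add: assms shprod_smul_left)
  moreover have "shprod q (shprod q B (shpow q u j)) u = shprod q B (shpow q u (Suc j))"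
    by (simp only: shprod_assoc shpow_Suc_right)
  ultimately have "br q u (shprod q B (shpow q u j)) = smul (\<rho> - 1) (shprod q B (shpow q u (Suc j)))"
    by (simp add: br_def smul_def fun_eq_iff algebra_simps)
  then show ?case
    by (simp add: Suc br_smul smul_smul mult.commute)
qed

definition ordered_monomial ::
    "(nat \<Rightarrow> nat \<Rightarrow> 'a::comm_ring_1) \<Rightarrow> (nat \<Rightarrow> nat list \<Rightarrow> 'a) \<Rightarrow> (nat \<Rightarrow> nat) \<Rightarrow> nat \<Rightarrow> nat list \<Rightarrow> 'a" where
  "ordered_monomial q u m t = foldl (\<lambda>a i. shprod q a (shpow q (u i) (m i))) (u 1) [2..<Suc t]"

definition nested_br ::
    "(nat \<Rightarrow> nat \<Rightarrow> 'a::comm_ring_1) \<Rightarrow> (nat \<Rightarrow> nat list \<Rightarrow> 'a) \<Rightarrow> (nat \<Rightarrow> nat) \<Rightarrow> nat \<Rightarrow> nat list \<Rightarrow> 'a" where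
  "nested_br q u m t = foldl (\<lambda>a i. (br q (u i) ^^ m i) a) (u 1) [2..<Suc t]"

lemma ordered_monomial_1: "ordered_monomial q u m (Suc 0) = u 1"
  and nested_br_1: "nested_br q u m (Suc 0) = u 1"
  by (simp_all add: ordered_monomial_def nested_br_def)

lemma ordered_monomial_Suc:
  "1 \<le> t \<Longrightarrow> ordered_monomial q u m (Suc t) = shprod q (ordered_monomial q u m t) (shpow q (u (Suc t)) (m (Suc t)))"
  and nested_br_Suc:
  "1 \<le> t \<Longrightarrow> nested_br q u m (Suc t) = (br q (u (Suc t)) ^^ m (Suc t)) (nested_br q u m t)"
  by (simp_all del: upt_Suc add: upt_Suc_append ordered_monomial_def nested_br_def)

context
  fixes q :: "nat \<Rightarrow> nat \<Rightarrow> 'a::comm_ring_1" and u :: "nat \<Rightarrow> nat list \<Rightarrow> 'a"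
    and r :: "nat \<Rightarrow> nat \<Rightarrow> 'a" and k :: nat
  assumes commute: "\<And>i j. i \<in> {1..k} \<Longrightarrow> j \<in> {1..k} \<Longrightarrow>
      shprod q (u i) (u j) = smul (r i j) (shprod q (u j) (u i))"
begin

lemma commute_ordered_monomial:
  assumes "i \<in> {1..k}" "1 \<le> t" "t \<le> k"
  shows "shprod q (u i) (ordered_monomial q u m t)
    = smul (r i 1 * (\<Prod>j=2..t. r i j ^ m j)) (shprod q (ordered_monomial q u m t) (u i))"
  using assms(2,3)
proof (induction t rule: nat_induct_at_least)
  case base
  then show ?case using commute[OF assms(1)] by (simp add: ordered_monomial_1)
next
  case (Suc t)
  let ?P = "shpow q (u (Suc t)) (m (Suc t))"
  have "shprod q (u i) ?P = smul (r i (Suc t) ^ m (Suc t)) (shprod q ?P (u i))"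
    using Suc.prems by (intro shprod_shpow_commute commute assms(1)) auto
  with Suc show ?case
    by (simp flip: shprod_assoc add: ordered_monomial_Suc shprod_smul_left)
      (simp add: shprod_assoc shprod_smul_right smul_smul mult_ac)
qed

lemma nested_br_eq_smul_ordered_monomial:
  assumes "1 \<le> t" "t \<le> k"
  shows "nested_br q u m t
    = smul (\<Prod>i=2..t. (r i 1 * (\<Prod>j=2..i-1. r i j ^ m j) - 1) ^ m i) (ordered_monomial q u m t)"
  using assms
proof (induction t rule: nat_induct_at_least)
  case base
  then show ?case by (simp add: nested_br_1 ordered_monomial_1 smul_one)
next
  case (Suc t)
  have "shprod q (u (Suc t)) (ordered_monomial q u m t)
      = smul (r (Suc t) 1 * (\<Prod>j=2..t. r (Suc t) j ^ m j)) (shprod q (ordered_monomial q u m t) (u (Suc t)))"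
    using Suc by (intro commute_ordered_monomial) auto
  with Suc show ?case
    by (simp add: nested_br_Suc ordered_monomial_Suc funpow_br_smul funpow_br_eq smul_smul mult_ac)
qed

end

lemma lie_minus_smul_cancel:
  assumes "smul c f \<in> lie_minus q n" and "(c::'a::field) \<noteq> 0"
  shows "f \<in> lie_minus q n"
  using lie_minus.smul[OF assms(1), of "inverse c"] assms(2) by (simp add: smul_smul smul_one)

lemma funpow_br_in_lie_minus:
  "f \<in> lie_minus q n \<Longrightarrow> g \<in> lie_minus q n \<Longrightarrow> (br q g ^^ j) f \<in> lie_minus q n"
  by (induction j) (auto intro: lie_minus.bracket)

lemma nested_br_in_lie_minus:
  assumes "\<And>i. i \<in> {1..k} \<Longrightarrow> u i \<in> lie_minus q n" and "1 \<le> t" "t \<le> k"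
  shows "nested_br q u m t \<in> lie_minus q n"
  using assms(2,3)
proof (induction t rule: nat_induct_at_least)
  case base
  then show ?case using assms(1) by (simp add: nested_br_1)
next
  case (Suc t)
  then show ?case using assms(1) by (simp add: nested_br_Suc funpow_br_in_lie_minus)
qed

lemma foldl_shprod_in_lie_minus:
  fixes u :: "nat \<Rightarrow> nat list \<Rightarrow> 'a::field"
  assumes commute: "\<And>i j. i \<in> {1..k} \<Longrightarrow> j \<in> {1..k} \<Longrightarrow>
      shprod q (u i) (u j) = smul (r i j) (shprod q (u j) (u i))"
    and "1 \<le> k"
    and L: "\<And>i. i \<in> {1..k} \<Longrightarrow> u i \<in> lie_minus q n"
    and r: "\<And>i. i \<in> {2..k} \<Longrightarrow> (\<Prod>j=1..i-1. r i j) \<noteq> 1"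
  shows "foldl (\<lambda>a i. shprod q a (u i)) (u 1) [2..<Suc k] \<in> lie_minus q n"
proof -
  let ?c = "\<Prod>i=2..k. r i 1 * (\<Prod>j=2..i-1. r i j) - 1"
  have "nested_br q u (\<lambda>_. 1) k = smul ?c (ordered_monomial q u (\<lambda>_. 1) k)"
    using nested_br_eq_smul_ordered_monomial[OF commute, where m = "\<lambda>_. 1" and t = k] \<open>1 \<le> k\<close>
    by simp
  then have "smul ?c (ordered_monomial q u (\<lambda>_. 1) k) \<in> lie_minus q n"
    using nested_br_in_lie_minus[of k u q n k "\<lambda>_. 1", OF L \<open>1 \<le> k\<close> order.refl] by simp
  moreover have "?c \<noteq> 0"
    unfolding prod_zero_iff[OF finite_atLeastAtMost] bex_simps(8)
  proof
    fix i assume "i \<in> {2..k}"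
    moreover have "(\<Prod>j=1..i-1. r i j) = r i 1 * (\<Prod>j=2..i-1. r i j)"
      using \<open>i \<in> {2..k}\<close> by (subst prod.atLeast_Suc_atMost) (auto simp: numeral_2_eq_2)
    ultimately show "r i 1 * (\<Prod>j=2..i-1. r i j) - 1 \<noteq> 0"
      using r by fastforce
  qed
  ultimately have "ordered_monomial q u (\<lambda>_. 1) k \<in> lie_minus q n"
    by (rule lie_minus_smul_cancel)
  then show ?thesis
    by (simp del: upt_Suc add: ordered_monomial_def shprod_monom_Nil_right)
qed

lemma shpow_shprod_in_lie_minus:
  fixes x y :: "nat list \<Rightarrow> 'a::field"
  assumes "x \<in> lie_minus q n" "y \<in> lie_minus q n"
    and xy: "shprod q x y = smul s (shprod q y x)" and yx: "shprod q y x = smul t (shprod q x y)"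
    and "s \<noteq> 1" "t \<noteq> 0" "t ^ a \<noteq> 1" "1 \<le> b"
  shows "shprod q (shpow q x a) (shpow q y b) \<in> lie_minus q n"
proof -
  let ?B = "shprod q (shpow q x a) y"
  have yB: "shprod q y (shpow q x a) = smul (t ^ a) ?B"
    by (rule shprod_shpow_commute[OF yx])
  have "(br q x ^^ a) y = smul ((s - 1) ^ a * t ^ a) ?B"
    by (simp add: funpow_br_eq[OF xy] yB smul_smul)
  then have "smul ((s - 1) ^ a * t ^ a) ?B \<in> lie_minus q n"
    by (metis funpow_br_in_lie_minus assms(1,2))
  then have "?B \<in> lie_minus q n"
    by (rule lie_minus_smul_cancel) (use assms in simp)
  moreover have "shprod q y ?B = smul (t ^ a) (shprod q ?B y)"
    by (simp flip: shprod_assoc add: yB shprod_smul_left)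
  ultimately have "smul ((t ^ a - 1) ^ (b - 1)) (shprod q ?B (shpow q y (b - 1))) \<in> lie_minus q n"
    using funpow_br_in_lie_minus[of ?B q n y "b - 1"] assms by (simp add: funpow_br_eq)
  moreover have "shprod q ?B (shpow q y (b - 1)) = shprod q (shpow q x a) (shpow q y b)"
    using \<open>1 \<le> b\<close> by (cases b) (simp_all add: shprod_assoc)
  ultimately show ?thesis
    using lie_minus_smul_cancel \<open>t ^ a \<noteq> 1\<close> by fastforce
qed

lemma ord_dvd_iff_power_eq_1:
  assumes "0 < a"
  shows "ord_dvd (s::'a::comm_ring_1) a \<longleftrightarrow> s ^ a = 1"
proof (cases "\<exists>k>0. s ^ k = 1")
  case False
  then have "mult_order s = None"
    by (simp add: mult_order_def)
  moreover have "s ^ a \<noteq> 1"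
    using False assms by blast
  ultimately show ?thesis
    by (simp add: ord_dvd_def)
next
  case True
  define d where "d = (LEAST k. k > 0 \<and> s ^ k = 1)"
  have d: "d > 0" "s ^ d = 1"
    using LeastI_ex[OF True] by (auto simp: d_def)
  have "s ^ a = s ^ (a mod d)"
    using d by (metis div_mult_mod_eq mult.commute mult_1 power_add power_mult power_one)
  moreover have "s ^ (a mod d) = 1 \<longleftrightarrow> a mod d = 0"
    using d Least_le[of "\<lambda>k. k > 0 \<and> s ^ k = 1" "a mod d"] mod_less_divisor[OF d(1), of a]
    by (cases "a mod d = 0") (auto simp flip: d_def)
  moreover have "mult_order s = Some d"
    using True by (simp add: mult_order_def d_def)
  ultimately show ?thesis
    by (simp add: ord_dvd_def dvd_eq_mod_eq_0)
qed

lemma shprod_neq_zero_of_shpow: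
  assumes "shprod q (shpow q x a) (shpow q y b) \<noteq> (\<lambda>w. 0)" and "1 \<le> a" "1 \<le> b"
  shows "shprod q x y \<noteq> (\<lambda>w. 0)"
proof
  assume xy: "shprod q x y = (\<lambda>w. 0)"
  have "shprod q (shpow q x a) (shpow q y b)
      = shprod q (shpow q x (a - 1)) (shprod q (shprod q x y) (shpow q y (b - 1)))"
    using \<open>1 \<le> a\<close> \<open>1 \<le> b\<close>
    by (metis Suc_diff_le diff_Suc_1 shpow.simps(2) shpow_Suc_right shprod_assoc)
  with assms(1) show False
    by (simp add: xy shprod_zero_left shprod_zero_right)
qed

lemma commutation_scalars_inverse:
  fixes x y :: "nat list \<Rightarrow> 'a::idom"
  assumes "shprod q x y = smul s (shprod q y x)" "shprod q y x = smul t (shprod q x y)"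
    and "shprod q x y \<noteq> (\<lambda>w. 0)"
  shows "s * t = 1"
proof -
  obtain w where w: "shprod q x y w \<noteq> 0"
    using assms(3) by auto
  have "shprod q x y w = s * t * shprod q x y w"
    by (subst assms(1)) (simp add: smul_apply assms(2))
  with w show ?thesis
    by (metis mult_1 mult_right_cancel)
qed

lemma shpow_shprod_in_lie_minus_of_not_ord_dvd:
  fixes x y :: "nat list \<Rightarrow> 'a::field"
  assumes L: "x \<in> lie_minus q n" "y \<in> lie_minus q n"
    and "s \<noteq> 0" "t \<noteq> 0"
    and xy: "shprod q x y = smul s (shprod q y x)" and yx: "shprod q y x = smul t (shprod q x y)"
    and "1 \<le> a" "1 \<le> b"
    and nonzero: "shprod q (shpow q x a) (shpow q y b) \<noteq> (\<lambda>w. 0)"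
    and "\<not> ord_dvd t a \<or> \<not> ord_dvd s b"
  shows "shprod q (shpow q x a) (shpow q y b) \<in> lie_minus q n"
proof -
  have st: "s * t = 1"
    using commutation_scalars_inverse[OF xy yx shprod_neq_zero_of_shpow[OF nonzero]] assms by blast
  consider "t ^ a \<noteq> 1" | "s ^ b \<noteq> 1"
    using assms ord_dvd_iff_power_eq_1[of a t] ord_dvd_iff_power_eq_1[of b s] by force
  then show ?thesis
  proof cases
    case 1
    with st have "s \<noteq> 1" by auto
    with 1 show ?thesis
      using shpow_shprod_in_lie_minus[OF L xy yx] assms by blast
  next
    case 2
    with st have "t \<noteq> 1" by auto
    with 2 have "shprod q (shpow q y b) (shpow q x a) \<in> lie_minus q n"
      using shpow_shprod_in_lie_minus[OF L(2,1) yx xy] assms by blast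
    then show ?thesis
      using lie_minus_smul_cancel[of "t ^ (b * a)"] \<open>t \<noteq> 0\<close> by (simp add: shpow_shpow_commute[OF yx])
  qed
qed

definition component :: "nat multiset \<Rightarrow> (nat list \<Rightarrow> 'a::zero) \<Rightarrow> nat list \<Rightarrow> 'a" where
  "component D f = (\<lambda>w. if mset w = D then f w else 0)"

definition homogeneous_of :: "nat multiset \<Rightarrow> (nat list \<Rightarrow> 'a::zero) \<Rightarrow> bool" where
  "homogeneous_of D f \<longleftrightarrow> (\<forall>w. f w \<noteq> 0 \<longrightarrow> mset w = D)"

lemma homogeneous_of_shprod:
  assumes "homogeneous_of D1 f" "homogeneous_of D2 g"
  shows "homogeneous_of (D1 + D2) (shprod q f g)"
  unfolding homogeneous_of_def
proof (intro allI impI)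
  fix w
  assume "shprod q f g w \<noteq> 0"
  then obtain u v where "f u * g v * wsh q u v w \<noteq> 0"
    unfolding shprod_def by (meson sum.not_neutral_contains_not_neutral)
  then have "f u \<noteq> 0" "g v \<noteq> 0" "wsh q u v w \<noteq> 0"
    by auto
  then show "mset w = D1 + D2"
    using assms wsh_nonzeroD[of q u v w] by (simp add: homogeneous_of_def)
qed

lemma homogeneous_of_shpow_gen: "homogeneous_of (replicate_mset N i) (shpow q (gen i) N)"
proof (induction N)
  case 0
  then show ?case by (simp add: homogeneous_of_def monom_def)
next
  case (Suc N)
  have "homogeneous_of {#i#} (gen i)"
    by (simp add: homogeneous_of_def gen_def monom_def)
  from homogeneous_of_shprod[OF this Suc.IH] show ?case
    by simp
qed

lemma component_homogeneous_of: "homogeneous_of D f \<Longrightarrow> component D f = f"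
  by (auto simp: homogeneous_of_def component_def fun_eq_iff)

lemma component_add: "component D (\<lambda>w. f w + g w) = (\<lambda>w. component D f w + component D g w)"
  and component_smul: "component D (smul c f) = smul c (component D f)"
  and component_br: "component D (br q f g) = (\<lambda>w. component D (shprod q f g) w - component D (shprod q g f) w)"
  and component_gen: "component D (gen j) = (if D = {#j#} then gen j else (\<lambda>w. 0))"
  by (auto simp: component_def smul_def br_def gen_def monom_def fun_eq_iff)

lemma component_shprod:
  assumes "finite I" and "\<And>p. p \<in> I \<Longrightarrow> D1 p + D2 p = D"
    and unique: "\<And>M1 M2. M1 + M2 = D \<Longrightarrow> \<exists>!p\<in>I. M1 = D1 p \<and> M2 = D2 p"
  shows "component D (shprod q f g) w = (\<Sum>p\<in>I. shprod q (component (D1 p) f) (component (D2 p) g) w)"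
proof -
  let ?S = "set (subseqs w)"
  have summand: "(\<Sum>p\<in>I. component (D1 p) f u * component (D2 p) g v * wsh q u v w)
      = (if mset w = D then f u * g v * wsh q u v w else 0)" for u v
  proof (cases "wsh q u v w \<noteq> 0 \<and> mset w = D")
    case True
    then have "mset u + mset v = D"
      using wsh_nonzeroD[of q u v w] by simp
    from unique[OF this] obtain p where p: "p \<in> I" "mset u = D1 p" "mset v = D2 p"
      and p_unique: "\<And>p'. p' \<in> I \<Longrightarrow> mset u = D1 p' \<Longrightarrow> mset v = D2 p' \<Longrightarrow> p' = p"
      by blast
    have "(\<Sum>p'\<in>I. component (D1 p') f u * component (D2 p') g v * wsh q u v w)
        = (\<Sum>p'\<in>{p}. component (D1 p') f u * component (D2 p') g v * wsh q u v w)"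
      using p by (intro sum.mono_neutral_right[OF assms(1)]) (auto simp: component_def dest: p_unique)
    then show ?thesis
      using p True by (simp add: component_def)
  next
    case False
    have "component (D1 p) f u * component (D2 p) g v * wsh q u v w = 0" if "p \<in> I" for p
      using False assms(2)[OF that] wsh_nonzeroD[of q u v w]
      by (cases "wsh q u v w = 0") (auto simp: component_def)
    then show ?thesis
      using False by auto
  qed
  have "(\<Sum>p\<in>I. shprod q (component (D1 p) f) (component (D2 p) g) w)
      = (\<Sum>p\<in>I. \<Sum>u\<in>?S. \<Sum>v\<in>?S. component (D1 p) f u * component (D2 p) g v * wsh q u v w)"
    by (simp add: shprod_def)
  also have "\<dots> = (\<Sum>u\<in>?S. \<Sum>p\<in>I. \<Sum>v\<in>?S. component (D1 p) f u * component (D2 p) g v * wsh q u v w)"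
    by (rule sum.swap)
  also have "\<dots> = (\<Sum>u\<in>?S. \<Sum>v\<in>?S. \<Sum>p\<in>I. component (D1 p) f u * component (D2 p) g v * wsh q u v w)"
    by (rule sum.cong[OF refl], rule sum.swap)
  also have "\<dots> = component D (shprod q f g) w"
    unfolding summand by (simp add: component_def shprod_def)
  finally show ?thesis ..
qed

abbreviation splittings :: "'e::plus \<Rightarrow> ('e \<times> 'e) set" where
  "splittings b \<equiv> {(d, e). d + e = b}"

text \<open>X b plays the role of the monomial x^b of multidegree deg b, and \<chi> d e is the scalar
  picked up when x^d x^e is rewritten as x^(d + e).\<close>
locale monomial_family =
  fixes q :: "nat \<Rightarrow> nat \<Rightarrow> 'a::comm_ring_1"
    and deg :: "'e::comm_monoid_add \<Rightarrow> nat multiset"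
    and X :: "'e \<Rightarrow> nat list \<Rightarrow> 'a"
    and \<chi> :: "'e \<Rightarrow> 'e \<Rightarrow> 'a"
  assumes deg_add: "deg (d + e) = deg d + deg e"
    and inj_deg: "inj deg"
    and subset_deg: "M \<subseteq># deg b \<Longrightarrow> \<exists>d. M = deg d"
    and finite_splittings: "finite (splittings b)"
    and X_mult: "shprod q (X d) (X e) = smul (\<chi> d e) (X (d + e))"
    and X_gen: "deg b = {#j#} \<Longrightarrow> X b = gen j"
    and homogeneous_X: "homogeneous_of (deg b) (X b)"
begin

text \<open>In such a degree the two products in a commutator [F, G] have equal components, since
  exchanging the parts of each splitting preserves \<chi>.\<close>
definition symmetric_deg :: "'e \<Rightarrow> bool" where
  "symmetric_deg b \<longleftrightarrow> (\<forall>j. deg b \<noteq> {#j#}) \<and> (\<forall>d e. d + e = b \<longrightarrow> \<chi> d e = \<chi> e d)"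

lemma splitting_unique:
  assumes "M1 + M2 = deg b"
  shows "\<exists>!p\<in>splittings b. M1 = deg (fst p) \<and> M2 = deg (snd p)"
proof -
  have "M1 \<subseteq># deg b" "M2 \<subseteq># deg b"
    unfolding assms[symmetric] by simp_all
  then obtain d e where de: "M1 = deg d" "M2 = deg e"
    using subset_deg by blast
  with assms have "deg (d + e) = deg b"
    by (simp add: deg_add)
  then have "d + e = b"
    by (rule injD[OF inj_deg])
  with de show ?thesis
    by (intro ex1I[of _ "(d, e)"]) (auto dest: injD[OF inj_deg])
qed

lemma component_shprod_X:
  assumes "\<And>d. component (deg d) F = smul (cF d) (X d)" "\<And>d. component (deg d) G = smul (cG d) (X d)"
  shows "component (deg b) (shprod q F G) = smul (\<Sum>(d, e)\<in>splittings b. cF d * cG e * \<chi> d e) (X b)"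
proof
  fix w
  have "component (deg b) (shprod q F G) w
      = (\<Sum>p\<in>splittings b. shprod q (component (deg (fst p)) F) (component (deg (snd p)) G) w)"
    by (rule component_shprod[OF finite_splittings _ splitting_unique]) (auto simp: deg_add)
  also have "\<dots> = (\<Sum>(d, e)\<in>splittings b. smul (cF d * cG e * \<chi> d e) (X b) w)"
    by (rule sum.cong) (auto simp: assms shprod_smul_left shprod_smul_right X_mult smul_smul mult_ac)
  finally show "component (deg b) (shprod q F G) w
      = smul (\<Sum>(d, e)\<in>splittings b. cF d * cG e * \<chi> d e) (X b) w"
    by (simp add: smul_apply sum_distrib_right case_prod_beta)
qed

lemma lie_minus_component:
  assumes "f \<in> lie_minus q n"
  shows "\<exists>c. component (deg b) f = smul c (X b) \<and> (symmetric_deg b \<longrightarrow> c = 0)"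
  using assms
proof (induction arbitrary: b)
  case (gen j)
  show ?case
  proof (cases "deg b = {#j#}")
    case True
    then show ?thesis
      by (intro exI[of _ 1]) (simp add: component_gen X_gen smul_one symmetric_deg_def)
  next
    case False
    then show ?thesis
      by (intro exI[of _ 0]) (simp add: component_gen smul_def)
  qed
next
  case (add f g)
  obtain c1 c2 where "component (deg b) f = smul c1 (X b)" "component (deg b) g = smul c2 (X b)"
    and "symmetric_deg b \<longrightarrow> c1 = 0" "symmetric_deg b \<longrightarrow> c2 = 0"
    using add.IH by blast
  then show ?case
    by (intro exI[of _ "c1 + c2"]) (simp add: component_add smul_def distrib_right)
next
  case (smul f c)
  obtain c1 where "component (deg b) f = smul c1 (X b)" "symmetric_deg b \<longrightarrow> c1 = 0"
    using smul.IH by blast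
  then show ?case
    by (intro exI[of _ "c * c1"]) (simp add: component_smul smul_smul)
next
  case (bracket f g)
  obtain cf cg where cf: "\<And>d. component (deg d) f = smul (cf d) (X d)"
    and cg: "\<And>d. component (deg d) g = smul (cg d) (X d)"
    using bracket.IH by metis
  define fg where "fg = (\<Sum>(d, e)\<in>splittings b. cf d * cg e * \<chi> d e)"
  define gf where "gf = (\<Sum>(d, e)\<in>splittings b. cg d * cf e * \<chi> d e)"
  have "component (deg b) (br q f g) = smul (fg - gf) (X b)"
    by (simp add: component_br component_shprod_X[OF cf cg] component_shprod_X[OF cg cf] fg_def gf_def
        smul_def fun_eq_iff algebra_simps)
  moreover have "gf = fg" if "symmetric_deg b"
    using that unfolding symmetric_deg_def fg_def gf_def
    by (intro sum.reindex_bij_witness[of _ prod.swap prod.swap]) (auto simp: add.commute mult_ac)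
  ultimately show ?case
    by auto
qed

lemma X_in_lie_minus_imp_eq_0:
  assumes "X b \<in> lie_minus q n" and "symmetric_deg b"
  shows "X b = (\<lambda>w. 0)"
proof -
  obtain c where "component (deg b) (X b) = smul c (X b)" "c = 0"
    using lie_minus_component[OF assms(1)] assms(2) by blast
  then show ?thesis
    by (simp add: component_homogeneous_of[OF homogeneous_X] smul_def)
qed

end

lemma monomial_family_shpow_gen:
  "monomial_family q (\<lambda>N. replicate_mset N i) (shpow q (gen i)) (\<lambda>_ _. 1)"
proof unfold_locales
  show "replicate_mset (d + e) i = replicate_mset d i + replicate_mset e i" for d e
    by (simp add: multiset_eq_iff)
  show "inj (\<lambda>N. replicate_mset N i)"
    by (rule injI) (metis size_replicate_mset)
  show "\<exists>d. M = replicate_mset d i" if "M \<subseteq># replicate_mset b i" for M b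
    using that by (metis msubseteq_replicate_msetE)
  show "finite (splittings b)" for b :: nat
    by (rule finite_subset[of _ "{..b} \<times> {..b}"]) auto
  show "shprod q (shpow q (gen i) d) (shpow q (gen i) e) = smul 1 (shpow q (gen i) (d + e))" for d e
    by (simp add: shpow_add smul_one)
  show "shpow q (gen i) b = gen j" if "replicate_mset b i = {#j#}" for b j
  proof -
    have "b = 1"
      using arg_cong[OF that, of size] by simp
    with that show ?thesis
      by (simp add: shprod_monom_Nil_right)
  qed
  show "homogeneous_of (replicate_mset b i) (shpow q (gen i) b)" for b
    by (rule homogeneous_of_shpow_gen)
qed

lemma monomial_family_shpow_shprod_gen:
  assumes "i1 \<noteq> i2" and yx: "shprod q (gen i2) (gen i1) = smul t (shprod q (gen i1) (gen i2))"
  shows "monomial_family q (\<lambda>b. replicate_mset (fst b) i1 + replicate_mset (snd b) i2)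
    (\<lambda>b. shprod q (shpow q (gen i1) (fst b)) (shpow q (gen i2) (snd b))) (\<lambda>d e. t ^ (snd d * fst e))"
proof unfold_locales
  let ?deg = "\<lambda>b::nat \<times> nat. replicate_mset (fst b) i1 + replicate_mset (snd b) i2"
  let ?x = "gen i1 :: nat list \<Rightarrow> 'a" and ?y = "gen i2 :: nat list \<Rightarrow> 'a"
  show "?deg (d + e) = ?deg d + ?deg e" for d e
    by (simp add: multiset_eq_iff)
  show "inj ?deg"
  proof (rule injI)
    fix b b' :: "nat \<times> nat"
    assume "?deg b = ?deg b'"
    then have "count (?deg b) i1 = count (?deg b') i1" "count (?deg b) i2 = count (?deg b') i2"
      by simp_all
    with assms(1) show "b = b'"
      by (simp add: prod_eq_iff)
  qed
  show "\<exists>d. M = ?deg d" if "M \<subseteq># ?deg b" for M b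
  proof
    have le: "count M j \<le> count (?deg b) j" for j
      using that by (rule mset_subset_eq_count)
    have "count M j = count (?deg (count M i1, count M i2)) j" for j
      using assms(1) le[of j] by (cases "j = i1"; cases "j = i2") auto
    then show "M = ?deg (count M i1, count M i2)"
      by (rule multiset_eqI)
  qed
  show "finite (splittings b)" for b :: "nat \<times> nat"
    by (rule finite_subset[of _ "({..fst b} \<times> {..snd b}) \<times> ({..fst b} \<times> {..snd b})"]) auto
  show "shprod q (shprod q (shpow q ?x (fst d)) (shpow q ?y (snd d)))
      (shprod q (shpow q ?x (fst e)) (shpow q ?y (snd e)))
    = smul (t ^ (snd d * fst e)) (shprod q (shpow q ?x (fst (d + e))) (shpow q ?y (snd (d + e))))" for d e
    by (simp flip: shprod_assoc add: shpow_add)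
      (simp add: shprod_assoc shpow_shpow_commute[OF yx] shprod_smul_left shprod_smul_right)
  show "shprod q (shpow q ?x (fst b)) (shpow q ?y (snd b)) = gen j" if "?deg b = {#j#}" for b j
  proof -
    have "fst b + snd b = 1"
      using arg_cong[OF that, of size] by simp
    then consider "b = (1, 0)" | "b = (0, 1)"
      by (cases b) (auto simp: add_is_1)
    then show ?thesis
      using that by cases (simp_all add: shprod_monom_Nil_left shprod_monom_Nil_right)
  qed
  show "homogeneous_of (?deg b) (shprod q (shpow q ?x (fst b)) (shpow q ?y (snd b)))" for b
    by (intro homogeneous_of_shprod homogeneous_of_shpow_gen)
qed

lemma power_cross_terms_eq:
  fixes t :: "'a::field"
  assumes "t \<noteq> 0" "t ^ (d1 + e1) = 1" "t ^ (d2 + e2) = 1"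
  shows "t ^ (d2 * e1) = t ^ (e2 * d1)"
proof -
  have "t ^ (d2 * e1) * t ^ (d1 * d2) = (t ^ (d1 + e1)) ^ d2"
    by (simp flip: power_add power_mult add: algebra_simps)
  moreover have "t ^ (e2 * d1) * t ^ (d1 * d2) = (t ^ (d2 + e2)) ^ d1"
    by (simp flip: power_add power_mult add: algebra_simps)
  ultimately show ?thesis
    using assms by (metis mult_right_cancel power_not_zero power_one)
qed

lemma shpow_shprod_gen_in_lie_minus_imp_not_ord_dvd:
  fixes q :: "nat \<Rightarrow> nat \<Rightarrow> 'a::field"
  assumes "t \<noteq> 0"
    and xy: "shprod q (gen i1) (gen i2) = smul s (shprod q (gen i2) (gen i1))"
    and yx: "shprod q (gen i2) (gen i1) = smul t (shprod q (gen i1) (gen i2))"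
    and "1 \<le> a" "1 \<le> b"
    and nonzero: "shprod q (shpow q (gen i1) a) (shpow q (gen i2) b) \<noteq> (\<lambda>w. 0)"
    and L: "shprod q (shpow q (gen i1) a) (shpow q (gen i2) b) \<in> lie_minus q n"
  shows "\<not> ord_dvd t a \<or> \<not> ord_dvd s b"
proof (rule ccontr)
  assume "\<not> (\<not> ord_dvd t a \<or> \<not> ord_dvd s b)"
  moreover have "0 < a" "0 < b"
    using \<open>1 \<le> a\<close> \<open>1 \<le> b\<close> by simp_all
  ultimately have ta: "t ^ a = 1" and sb: "s ^ b = 1"
    using ord_dvd_iff_power_eq_1[of a t] ord_dvd_iff_power_eq_1[of b s] by simp_all
  show False
  proof (cases "i1 = i2")
    case True
    interpret monomial_family q "\<lambda>N. replicate_mset N i1" "shpow q (gen i1)" "\<lambda>_ _. 1"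
      by (rule monomial_family_shpow_gen)
    have "replicate_mset (a + b) i1 \<noteq> {#j#}" for j
      using \<open>1 \<le> a\<close> \<open>1 \<le> b\<close> by (intro notI) (drule arg_cong[of _ _ size], simp)
    then have "symmetric_deg (a + b)"
      by (simp add: symmetric_deg_def)
    then show False
      using X_in_lie_minus_imp_eq_0[of "a + b"] L nonzero True by (simp add: shpow_add)
  next
    case False
    interpret monomial_family q "\<lambda>b. replicate_mset (fst b) i1 + replicate_mset (snd b) i2"
      "\<lambda>b. shprod q (shpow q (gen i1) (fst b)) (shpow q (gen i2) (snd b))" "\<lambda>d e. t ^ (snd d * fst e)"
      by (rule monomial_family_shpow_shprod_gen[OF False yx])
    have "s * t = 1"
      using commutation_scalars_inverse[OF xy yx shprod_neq_zero_of_shpow[OF nonzero]] assms(4,5)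
      by blast
    then have tb: "t ^ b = 1"
      using power_mult_distrib[of s t b] sb by simp
    have "t ^ (d2 * e1) = t ^ (e2 * d1)" if "d1 + e1 = a" "d2 + e2 = b" for d1 d2 e1 e2
      using that ta tb by (intro power_cross_terms_eq[OF \<open>t \<noteq> 0\<close>]) simp_all
    moreover have "replicate_mset a i1 + replicate_mset b i2 \<noteq> {#j#}" for j
      using \<open>1 \<le> a\<close> \<open>1 \<le> b\<close> by (intro notI) (drule arg_cong[of _ _ size], simp)
    ultimately have "symmetric_deg (a, b)"
      by (auto simp: symmetric_deg_def)
    then show False
      using X_in_lie_minus_imp_eq_0[of "(a, b)"] L nonzero by simp
  qed
qed

theorem lemma6p6:
  fixes q :: "nat \<Rightarrow> nat \<Rightarrow> 'a::field_char_0" and n :: nat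
  assumes "alg_closed TYPE('a)"
    and "\<forall>i<n. \<forall>j<n. q i j \<noteq> 0"
  shows
  "(\<forall>(k::nat) (u::nat \<Rightarrow> nat list \<Rightarrow> 'a) (r::nat \<Rightarrow> nat \<Rightarrow> 'a).
      2 \<le> k
      \<and> (\<forall>i\<in>{1..k}. u i \<in> nichols q n \<and> homogeneous (u i))
      \<and> (\<forall>i\<in>{1..k}. \<forall>j\<in>{1..k}. r i j \<noteq> 0
            \<and> shprod q (u i) (u j) = smul (r i j) (shprod q (u j) (u i))
            \<and> (u i = u j \<longrightarrow> r i j = 1))
      \<longrightarrow>
      (\<forall>m::nat \<Rightarrow> nat.
         foldl (\<lambda>a i. (br q (u i) ^^ m i) a) (u 1) [2..<Suc k]
         = smul (\<Prod>i=2..k. (r i 1 * (\<Prod>j=2..i-1. r i j ^ m j) - 1) ^ m i)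
                (foldl (\<lambda>a i. shprod q a (shpow q (u i) (m i))) (u 1) [2..<Suc k]))
      \<and> ((\<forall>i\<in>{1..k}. u i \<in> lie_minus q n) \<and> (\<forall>i\<in>{2..k}. (\<Prod>j=1..i-1. r i j) \<noteq> 1)
          \<longrightarrow> foldl (\<lambda>a i. shprod q a (u i)) (u 1) [2..<Suc k] \<in> lie_minus q n))
  \<and> (\<forall>(v1::nat list \<Rightarrow> 'a) v2 (s12::'a) s21 (a1::nat) a2.
      v1 \<in> lie_minus q n \<and> v2 \<in> lie_minus q n \<and> homogeneous v1 \<and> homogeneous v2
      \<and> s12 \<noteq> 0 \<and> s21 \<noteq> 0 \<and> (v1 = v2 \<longrightarrow> s12 = 1 \<and> s21 = 1)
      \<and> shprod q v1 v2 = smul s12 (shprod q v2 v1)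
      \<and> shprod q v2 v1 = smul s21 (shprod q v1 v2)
      \<and> 1 \<le> a1 \<and> 1 \<le> a2
      \<and> shprod q (shpow q v1 a1) (shpow q v2 a2) \<noteq> (\<lambda>w. 0)
      \<and> (\<not> ord_dvd s21 a1 \<or> \<not> ord_dvd s12 a2)
      \<longrightarrow> shprod q (shpow q v1 a1) (shpow q v2 a2) \<in> lie_minus q n)
  \<and> (\<forall>(i1::nat) i2 (s12::'a) s21 (a1::nat) a2.
      i1 < n \<and> i2 < n
      \<and> s12 \<noteq> 0 \<and> s21 \<noteq> 0 \<and> (i1 = i2 \<longrightarrow> s12 = 1 \<and> s21 = 1)
      \<and> shprod q (gen i1) (gen i2) = smul s12 (shprod q (gen i2) (gen i1))
      \<and> shprod q (gen i2) (gen i1) = smul s21 (shprod q (gen i1) (gen i2))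
      \<and> 1 \<le> a1 \<and> 1 \<le> a2
      \<and> shprod q (shpow q (gen i1) a1) (shpow q (gen i2) a2) \<noteq> (\<lambda>w. 0)
      \<longrightarrow> (shprod q (shpow q (gen i1) a1) (shpow q (gen i2) a2) \<in> lie_minus q n
           \<longleftrightarrow> (\<not> ord_dvd s21 a1 \<or> \<not> ord_dvd s12 a2)))"
  apply (intro conjI allI impI; elim conjE)
  subgoal for k u r m
    unfolding nested_br_def[symmetric] ordered_monomial_def[symmetric]
    by (rule nested_br_eq_smul_ordered_monomial[where k = k]) (blast | linarith)+
  subgoal for k u r
    by (rule foldl_shprod_in_lie_minus[where r = r]) (blast | linarith)+
  subgoal for v1 v2 s12 s21 a1 a2
    by (rule shpow_shprod_in_lie_minus_of_not_ord_dvd[where s = s12 and t = s21]) assumption+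
  subgoal for i1 i2 s12 s21 a1 a2
    using shpow_shprod_in_lie_minus_of_not_ord_dvd[OF lie_minus.gen lie_minus.gen, where s = s12 and t = s21]
      shpow_shprod_gen_in_lie_minus_imp_not_ord_dvd[where s = s12 and t = s21]
    by blast
  done

end
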